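(* Let $\Omega=[-1/2,1/2]^d$ and let $\Lambda\subseteq\mathbb{R}^d$ be a set of stable sampling for $\mathcal{B}_\Omega$ with bounds $A,B$. Then $\Lambda$ intersects every cube $x+[-R,R]^d$, $x\in\mathbb{R}^d$, where \[ R=\frac12+\frac{d\,\pi^{2d-2}}{2^{2d-1}}\frac{B}{A}. \]
   Context: Fourier transform: $\widehat f(\omega)=\int_{\mathbb{R}^d} f(r)e^{-2\pi i\langle\omega,r\rangle}dr$. $\mathcal{B}_\Omega=\{f\in L^2(\mathbb{R}^d):\widehat f=0\text{ a.e. outside }\Omega\}$. $\Lambda$ is a set of stable sampling for $\mathcal{B}_\Omega$ with bounds $0<A\le B<\infty$ if $A\|f\|_2^2\le\sum_{\lambda\in\Lambda}|f(\lambda)|^2\le B\|f\|_2^2$ for all $f\in\mathcal{B}_\Omega$. (This is part (b) of the proposition; part (a) is attributed to earlier work.) *)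

theory Defs
  imports "HOL-Analysis.Analysis"
begin

definition unit_cube :: "(real ^ 'n) set" where
  "unit_cube = {w. \<forall>i. \<bar>w $ i\<bar> \<le> 1/2}"

text \<open>Paley--Wiener space B_Omega: the (continuous representatives of) L^2 functions whose
  Fourier transform vanishes outside Omega, i.e. f(x) = int_Omega g(w) e^{2 pi i <w,x>} dw
  with g in L^2(Omega); f itself is required to be in L^2(R^d).\<close>
definition PW :: "(real ^ 'n) set \<Rightarrow> ((real ^ 'n) \<Rightarrow> complex) set" where
  "PW \<Omega> = {f. (\<exists>g. g \<in> borel_measurable lborel
                    \<and> set_integrable lborel \<Omega> (\<lambda>w. (cmod (g w))\<^sup>2)
                    \<and> (\<forall>x. f x = (LINT w:\<Omega>|lborel. g w * cis (2 * pi * (w \<bullet> x)))))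
             \<and> f \<in> borel_measurable lborel
             \<and> integrable lborel (\<lambda>x. (cmod (f x))\<^sup>2)}"

definition L2_norm_sq :: "((real ^ 'n) \<Rightarrow> complex) \<Rightarrow> real" where
  "L2_norm_sq f = (LINT x|lborel. (cmod (f x))\<^sup>2)"

definition stable_sampling ::
  "(real ^ 'n) set \<Rightarrow> (real ^ 'n) set \<Rightarrow> real \<Rightarrow> real \<Rightarrow> bool" where
  "stable_sampling \<Lambda> \<Omega> A B \<longleftrightarrow> 0 < A \<and> A \<le> B \<and>
     (\<forall>f \<in> PW \<Omega>. (\<lambda>l. (cmod (f l))\<^sup>2) summable_on \<Lambda>
        \<and> A * L2_norm_sq f \<le> (\<Sum>\<^sub>\<infinity>l\<in>\<Lambda>. (cmod (f l))\<^sup>2)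
        \<and> (\<Sum>\<^sub>\<infinity>l\<in>\<Lambda>. (cmod (f l))\<^sup>2) \<le> B * L2_norm_sq f)"

end

theory Submission
  imports Defs
begin

(* If \<Lambda> misses the cube of half-side R centred at x, test the sampling inequalities on the
   separable function F(y) = \<Prod>\<^sub>i \<phi>(y\<^sub>i - x\<^sub>i), where \<phi>(u) = (1 - cos \<pi>u)/(\<pi>u)\<^sup>2 is the Fourier transform
   of the triangle 1 - 2|w| on [-1/2,1/2], and on H\<^sub>j(y) = (y\<^sub>j - x\<^sub>j) F(y), whose j-th factor u \<phi>(u)
   is the transform of a multiple of the derivative of the triangle. Every sample point has a
   coordinate with |y\<^sub>j - x\<^sub>j| > R, so R\<^sup>2 |F|\<^sup>2 \<le> \<Sum>\<^sub>j |H\<^sub>j|\<^sup>2 on \<Lambda>; the lower bound for F and the upper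
   bounds for the H\<^sub>j then give R\<^sup>2 A \<parallel>\<phi>\<parallel>\<^sup>2 \<le> d B \<parallel>u \<phi>\<parallel>\<^sup>2. Polynomial majorants and minorants of \<phi>\<^sup>2
   show \<parallel>u \<phi>\<parallel> < \<parallel>\<phi>\<parallel>, hence R\<^sup>2 < d B/A, whereas the stated R satisfies R\<^sup>2 \<ge> d B/A. *)

lemma
  fixes f :: "'a::euclidean_space \<Rightarrow> real \<Rightarrow> 'b::{real_normed_field,banach,second_countable_topology}"
  assumes integrable: "\<And>b. b \<in> Basis \<Longrightarrow> integrable lborel (f b)"
  shows integrable_lborel_prod_Basis: "integrable lborel (\<lambda>x. \<Prod>b\<in>Basis. f b (x \<bullet> b))"
    and integral_lborel_prod_Basis:
      "(\<integral>x. (\<Prod>b\<in>Basis. f b (x \<bullet> b)) \<partial>lborel) = (\<Prod>b\<in>Basis. integral\<^sup>L lborel (f b))"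
proof -
  interpret product_sigma_finite "\<lambda>_::'a. lborel::real measure"
    by standard
  have [measurable]: "f b \<in> borel_measurable borel" if "b \<in> Basis" for b
    using integrable[OF that] by (simp add: measurable_lborel1[symmetric])
  have meas_f: "(\<lambda>x::'a. \<Prod>b\<in>Basis. f b (x \<bullet> b)) \<in> borel_measurable borel"
    by measurable
  have meas_sum: "(\<lambda>y. \<Sum>b\<in>Basis. y b *\<^sub>R b) \<in> measurable (Pi\<^sub>M (Basis::'a set) (\<lambda>_. lborel)) borel"
    by measurable
  have coord: "(\<Sum>b\<in>Basis. y b *\<^sub>R b) \<bullet> c = y c" if "c \<in> Basis" for y and c :: 'a
    using that by (simp add: inner_sum_left inner_Basis if_distrib cong: if_cong)
  have "integrable (Pi\<^sub>M Basis (\<lambda>_. lborel)) (\<lambda>y. \<Prod>b\<in>(Basis::'a set). f b (y b))"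
    by (rule product_integrable_prod) (auto intro: integrable)
  then have "integrable (Pi\<^sub>M Basis (\<lambda>_. lborel))
      (\<lambda>y. (\<lambda>x::'a. \<Prod>b\<in>Basis. f b (x \<bullet> b)) (\<Sum>b\<in>Basis. y b *\<^sub>R b))"
    by (simp add: coord cong: prod.cong)
  then have "integrable (distr (Pi\<^sub>M Basis (\<lambda>_. lborel)) borel (\<lambda>y. \<Sum>b\<in>Basis. y b *\<^sub>R b))
      (\<lambda>x::'a. \<Prod>b\<in>Basis. f b (x \<bullet> b))"
    by (subst integrable_distr_eq[OF meas_sum meas_f])
  then show "integrable lborel (\<lambda>x. \<Prod>b\<in>Basis. f b (x \<bullet> b))"
    by (simp add: lborel_eq[symmetric])
  have "(\<integral>x. (\<Prod>b\<in>Basis. f b (x \<bullet> b)) \<partial>lborel)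
      = (\<integral>y. (\<Prod>b\<in>(Basis::'a set). f b (y b)) \<partial>(Pi\<^sub>M Basis (\<lambda>_. lborel)))"
    by (subst lborel_eq, subst integral_distr[OF meas_sum meas_f]) (simp add: coord cong: prod.cong)
  also have "\<dots> = (\<Prod>b\<in>Basis. integral\<^sup>L lborel (f b))"
    by (rule product_integral_prod) (auto intro: integrable)
  finally show "(\<integral>x. (\<Prod>b\<in>Basis. f b (x \<bullet> b)) \<partial>lborel) = (\<Prod>b\<in>Basis. integral\<^sup>L lborel (f b))" .
qed

lemma prod_Basis_vec: "(\<Prod>b\<in>(Basis::(real^'n) set). f b) = (\<Prod>i\<in>UNIV. f (axis i 1))"
proof -
  have "(Basis::(real^'n) set) = range (\<lambda>i. axis i 1)"
    by (auto simp: Basis_vec_def)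
  moreover have "inj (\<lambda>i::'n. axis i (1::real))"
    by (auto simp: inj_def axis_eq_axis)
  ultimately show ?thesis
    by (metis (no_types, lifting) prod.reindex_cong)
qed

lemma
  fixes f :: "'n::finite \<Rightarrow> real \<Rightarrow> 'b::{real_normed_field,banach,second_countable_topology}"
  assumes integrable: "\<And>i. integrable lborel (f i)"
  shows integrable_lborel_prod_vec: "integrable lborel (\<lambda>x::real^'n. \<Prod>i\<in>UNIV. f i (x$i))"
    and integral_lborel_prod_vec:
      "(\<integral>x. (\<Prod>i\<in>UNIV. f i (x$i)) \<partial>(lborel::(real^'n) measure)) = (\<Prod>i\<in>UNIV. integral\<^sup>L lborel (f i))"
proof -
  have coords: "(\<Prod>i\<in>UNIV. f i (x$i)) = (\<Prod>b\<in>Basis. f (axis_index b) (x \<bullet> b))" for x :: "real^'n"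
    by (simp add: prod_Basis_vec inner_axis)
  have int: "\<And>b::real^'n. b \<in> Basis \<Longrightarrow> integrable lborel (f (axis_index b))"
    by (rule integrable)
  show "integrable lborel (\<lambda>x::real^'n. \<Prod>i\<in>UNIV. f i (x$i))"
    unfolding coords by (rule integrable_lborel_prod_Basis[where f = "\<lambda>b. f (axis_index b)", OF int])
  have "(\<integral>x. (\<Prod>i\<in>UNIV. f i (x$i)) \<partial>(lborel::(real^'n) measure))
      = (\<integral>x. (\<Prod>b\<in>Basis. f (axis_index b) (x \<bullet> b)) \<partial>(lborel::(real^'n) measure))"
    by (simp only: coords)
  also have "\<dots> = (\<Prod>b\<in>(Basis::(real^'n) set). integral\<^sup>L lborel (f (axis_index b)))"
    by (rule integral_lborel_prod_Basis[where f = "\<lambda>b. f (axis_index b)", OF int])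
  finally show "(\<integral>x. (\<Prod>i\<in>UNIV. f i (x$i)) \<partial>(lborel::(real^'n) measure)) = (\<Prod>i\<in>UNIV. integral\<^sup>L lborel (f i))"
    by (simp add: prod_Basis_vec)
qed

lemma mem_unit_cube: "w \<in> unit_cube \<longleftrightarrow> (\<forall>i. w$i \<in> {-1/2..1/2::real})"
proof -
  have "\<bar>t\<bar> \<le> 1/2 \<longleftrightarrow> t \<in> {-1/2..1/2}" for t :: real
    by auto
  then show ?thesis
    by (simp only: unit_cube_def mem_Collect_eq)
qed

lemma indicator_unit_cube:
  "(indicator unit_cube (w::real^'n) :: real) = (\<Prod>i\<in>UNIV. indicator {-1/2..1/2} (w$i))"
proof (cases "w \<in> unit_cube")
  case False
  then obtain i where "w$i \<notin> {-1/2..1/2}"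
    by (auto simp: mem_unit_cube)
  then have "(\<Prod>i\<in>UNIV. indicator {-1/2..1/2} (w$i)) = (0::real)"
    by (intro prod_zero bexI[of _ i]) auto
  then show ?thesis
    using False by simp
qed (simp add: mem_unit_cube)

lemma unit_cube_cbox: "(unit_cube :: (real^'n) set) = cbox (vec (-1/2)) (vec (1/2))"
  by (auto simp: mem_unit_cube mem_box_cart)

lemma set_lebesgue_integral_unit_cube_prod:
  fixes h :: "'n::finite \<Rightarrow> real \<Rightarrow> complex"
  assumes "\<And>i. set_integrable lborel {-1/2..1/2} (h i)"
  shows "(LINT w:unit_cube|lborel. \<Prod>i\<in>UNIV. h i (w$i)) = (\<Prod>i\<in>UNIV. LINT v:{-1/2..1/2}|lborel. h i v)"
proof -
  have factor: "indicator unit_cube w *\<^sub>R (\<Prod>i\<in>UNIV. h i (w$i))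
      = (\<Prod>i\<in>UNIV. indicator {-1/2..1/2} (w$i) *\<^sub>R h i (w$i))" for w :: "real^'n"
    by (simp add: indicator_unit_cube scaleR_conv_of_real prod.distrib)
  have "(LINT w:unit_cube|lborel. \<Prod>i\<in>UNIV. h i (w$i))
      = (\<integral>w. (\<Prod>i\<in>UNIV. indicator {-1/2..1/2} (w$i) *\<^sub>R h i (w$i)) \<partial>lborel)"
    unfolding set_lebesgue_integral_def factor ..
  also have "\<dots> = (\<Prod>i\<in>UNIV. LINT v:{-1/2..1/2}|lborel. h i v)"
    using assms unfolding set_lebesgue_integral_def set_integrable_def
    by (rule integral_lborel_prod_vec[where f = "\<lambda>i v. indicator {-1/2..1/2} v *\<^sub>R h i v"])
  finally show ?thesis .
qed

section \<open>Fourier transforms of the triangle and of its derivative\<close>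

lemma has_integral_affine_times_cis:
  fixes a :: real and p q :: complex
  assumes "a \<noteq> 0" and "lo \<le> hi"
  defines "F \<equiv> \<lambda>w::real. cis (a * w) * (p + q * w) / (\<i> * a) + q * cis (a * w) / (of_real a)\<^sup>2"
  shows "((\<lambda>w. (p + q * w) * cis (a * w)) has_integral F hi - F lo) {lo..hi}"
proof -
  define H where "H = (\<lambda>z. exp (\<i> * a * z) * (p + q * z) / (\<i> * a) + q * exp (\<i> * a * z) / (of_real a)\<^sup>2)"
  have deriv: "(H has_field_derivative (p + q * z) * exp (\<i> * a * z)) (at z)" for z
    unfolding H_def using assms(1)
    by (auto intro!: derivative_eq_intros simp: field_simps power2_eq_square power4_eq_xxxx)
  have "((\<lambda>w. (p + q * w) * exp (\<i> * a * w)) has_integral H hi - H lo) {lo..hi}"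
    by (intro fundamental_theorem_of_calculus[OF assms(2)]
        has_vector_derivative_at_within[OF has_vector_derivative_real_field] deriv)
  then show ?thesis
    by (simp add: F_def H_def cis_conv_exp mult.assoc)
qed

lemma has_integral_affine:
  fixes p q :: complex and lo hi :: real
  assumes "lo \<le> hi"
  shows "((\<lambda>w. p + q * w) has_integral (p * hi + q * hi\<^sup>2 / 2) - (p * lo + q * lo\<^sup>2 / 2)) {lo..hi}"
proof -
  define G where "G = (\<lambda>z. p * z + q * z\<^sup>2 / 2)"
  have deriv: "(G has_field_derivative p + q * z) (at z)" for z
    unfolding G_def by (auto intro!: derivative_eq_intros simp: field_simps power2_eq_square)
  have "((\<lambda>w. p + q * w) has_integral G hi - G lo) {lo..hi}"
    by (intro fundamental_theorem_of_calculus[OF assms]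
        has_vector_derivative_at_within[OF has_vector_derivative_real_field] deriv)
  then show ?thesis
    by (simp add: G_def)
qed

definition affine_cis_primitive :: "real \<Rightarrow> complex \<Rightarrow> complex \<Rightarrow> real \<Rightarrow> complex" where
  "affine_cis_primitive a p q w =
    (if a = 0 then p * w + q * w\<^sup>2 / 2
     else cis (a * w) * (p + q * w) / (\<i> * a) + q * cis (a * w) / (of_real a)\<^sup>2)"

lemma has_integral_affine_cis_primitive:
  assumes "lo \<le> hi"
  shows "((\<lambda>w. (p + q * w) * cis (a * w)) has_integral
    affine_cis_primitive a p q hi - affine_cis_primitive a p q lo) {lo..hi}"
proof (cases "a = 0")
  case True
  then show ?thesis
    using has_integral_affine[OF assms, of p q] by (simp add: affine_cis_primitive_def)
next
  case False
  then show ?thesis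
    using has_integral_affine_times_cis[OF False assms, of p q] by (simp add: affine_cis_primitive_def)
qed

lemma cis_add_cis_minus: "cis t + cis (- t) = of_real (2 * cos t)"
  by (simp add: complex_eq_iff)

definition tri :: "real \<Rightarrow> complex" where
  "tri w = of_real (1 - 2 * \<bar>w\<bar>)"

(* i/(2\<pi>) times the derivative of tri, so that its transform is u times that of tri. *)
definition tri_slope :: "real \<Rightarrow> complex" where
  "tri_slope w = (if w \<le> 0 then \<i> / pi else - \<i> / pi)"

definition tri_hat :: "real \<Rightarrow> real" where
  "tri_hat u = (if u = 0 then 1/2 else (1 - cos (pi * u)) / (pi * u)\<^sup>2)"

lemma has_integral_tri_cis:
  "((\<lambda>v. tri v * cis (2 * pi * u * v)) has_integral of_real (tri_hat u)) {-1/2..1/2}"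
proof -
  define a where "a = 2 * pi * u"
  define F where "F = affine_cis_primitive a"
  have left: "((\<lambda>v. tri v * cis (2 * pi * u * v)) has_integral F 1 2 0 - F 1 2 (-1/2)) {-1/2..0}"
    using has_integral_affine_cis_primitive[of "-1/2" 0 1 2 a]
    by (subst has_integral_cong[where g = "\<lambda>v. (1 + 2 * of_real v) * cis (a * v)"])
      (simp_all add: F_def tri_def a_def mult.commute)
  have right: "((\<lambda>v. tri v * cis (2 * pi * u * v)) has_integral F 1 (-2) (1/2) - F 1 (-2) 0) {0..1/2}"
    using has_integral_affine_cis_primitive[of 0 "1/2" 1 "-2" a]
    by (subst has_integral_cong[where g = "\<lambda>v. (1 + (-2) * of_real v) * cis (a * v)"])
      (simp_all add: F_def tri_def a_def mult.commute)
  have "F 1 2 0 - F 1 2 (-1/2) + (F 1 (-2) (1/2) - F 1 (-2) 0) = of_real (tri_hat u)"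
  proof (cases "u = 0")
    case False
    then have "a \<noteq> 0"
      by (simp add: a_def)
    then have "F 1 2 0 - F 1 2 (-1/2) + (F 1 (-2) (1/2) - F 1 (-2) 0)
        = 2 * (2 - (cis (a/2) + cis (- (a/2)))) / a\<^sup>2"
      by (simp add: F_def affine_cis_primitive_def field_simps)
    moreover have "tri_hat u = 2 * (2 - 2 * cos (a/2)) / a\<^sup>2"
      using False by (simp add: tri_hat_def a_def power_mult_distrib field_simps)
    ultimately show ?thesis
      by (simp only: cis_add_cis_minus of_real_divide of_real_diff of_real_mult of_real_numeral of_real_power)
  qed (simp add: F_def affine_cis_primitive_def a_def tri_hat_def power2_eq_square)
  then show ?thesis
    using has_integral_combine[OF _ _ left right] by simp
qed

lemma has_integral_tri_slope_cis:
  "((\<lambda>v. tri_slope v * cis (2 * pi * u * v)) has_integral of_real (u * tri_hat u)) {-1/2..1/2}"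
proof -
  define a where "a = 2 * pi * u"
  define F where "F p = affine_cis_primitive a p 0" for p
  have left: "((\<lambda>v. tri_slope v * cis (2 * pi * u * v)) has_integral
      F (\<i> / pi) 0 - F (\<i> / pi) (-1/2)) {-1/2..0}"
    using has_integral_affine_cis_primitive[of "-1/2" 0 "\<i> / pi" 0 a]
    by (subst has_integral_cong[where g = "\<lambda>v. (\<i> / pi + 0 * of_real v) * cis (a * v)"])
      (simp_all add: F_def tri_slope_def a_def mult.commute)
  have right: "((\<lambda>v. tri_slope v * cis (2 * pi * u * v)) has_integral
      F (- \<i> / pi) (1/2) - F (- \<i> / pi) 0) {0..1/2}"
    using has_integral_affine_cis_primitive[of 0 "1/2" "- \<i> / pi" 0 a]
    by (subst has_integral_spike_finite_eq[where S = "{0}" and g = "\<lambda>v. (- \<i> / pi + 0 * of_real v) * cis (a * v)"])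
      (simp_all add: F_def tri_slope_def a_def mult.commute)
  have "F (\<i> / pi) 0 - F (\<i> / pi) (-1/2) + (F (- \<i> / pi) (1/2) - F (- \<i> / pi) 0) = of_real (u * tri_hat u)"
  proof (cases "u = 0")
    case False
    then have "a \<noteq> 0"
      by (simp add: a_def)
    then have "F (\<i> / pi) 0 - F (\<i> / pi) (-1/2) + (F (- \<i> / pi) (1/2) - F (- \<i> / pi) 0)
        = (2 - (cis (a/2) + cis (- (a/2)))) / (pi * a)"
      by (simp add: F_def affine_cis_primitive_def field_simps)
    moreover have "u * tri_hat u = (2 - 2 * cos (a/2)) / (pi * a)"
      using False by (simp add: tri_hat_def a_def power_mult_distrib field_simps power2_eq_square)
    ultimately show ?thesis
      by (simp only: cis_add_cis_minus of_real_divide of_real_diff of_real_mult of_real_numeral)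
  qed (simp add: F_def affine_cis_primitive_def a_def)
  then show ?thesis
    using has_integral_combine[OF _ _ left right] by simp
qed

lemma one_minus_cos_le: "1 - cos x \<le> x\<^sup>2 / 2" for x :: real
proof -
  have "1 - cos t \<le> t\<^sup>2 / 2" if "0 \<le> t" for t :: real
  proof -
    have "(\<lambda>s. s\<^sup>2 / 2 - 1 + cos s) 0 \<le> (\<lambda>s. s\<^sup>2 / 2 - 1 + cos s) t"
      by (rule DERIV_nonneg_imp_nondecreasing[OF that])
        (auto intro!: exI derivative_eq_intros simp: sin_x_le_x)
    then show ?thesis
      by simp
  qed
  from this[of "\<bar>x\<bar>"] show ?thesis
    by simp
qed

lemma sin_ge_cubic: "x - x^3 / 6 \<le> sin x" if "0 \<le> x" for x :: real
proof -
  have "\<And>s. ((\<lambda>s. sin s - s + s^3 / 6) has_real_derivative cos s - 1 + s\<^sup>2 / 2) (at s)"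
    by (auto intro!: derivative_eq_intros simp: field_simps power2_eq_square)
  moreover have "0 \<le> cos s - 1 + s\<^sup>2 / 2" for s :: real
    using one_minus_cos_le[of s] by simp
  ultimately have "(\<lambda>s. sin s - s + s^3 / 6) 0 \<le> (\<lambda>s. sin s - s + s^3 / 6) x"
    by (intro DERIV_nonneg_imp_nondecreasing[OF that]) blast
  then show ?thesis
    by simp
qed

lemma cos_le_quartic: "cos x \<le> 1 - x\<^sup>2 / 2 + x^4 / 24" for x :: real
proof -
  have "cos t \<le> 1 - t\<^sup>2 / 2 + t^4 / 24" if "0 \<le> t" for t :: real
  proof -
    have "(\<lambda>s. 1 - s\<^sup>2 / 2 + s^4 / 24 - cos s) 0 \<le> (\<lambda>s. 1 - s\<^sup>2 / 2 + s^4 / 24 - cos s) t"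
      by (rule DERIV_nonneg_imp_nondecreasing[OF that])
        (auto intro!: exI derivative_eq_intros dest: sin_ge_cubic
          simp: algebra_simps power2_eq_square power3_eq_cube)
    then show ?thesis
      by simp
  qed
  from this[of "\<bar>x\<bar>"] show ?thesis
    by (simp add: power_even_abs_numeral)
qed

lemma tri_hat_nonneg: "0 \<le> tri_hat u"
  by (simp add: tri_hat_def)

lemma tri_hat_le_half: "tri_hat u \<le> 1/2"
  using one_minus_cos_le[of "pi * u"] by (simp add: tri_hat_def divide_le_eq)

lemma tri_hat_le_inverse_square: "u \<noteq> 0 \<Longrightarrow> tri_hat u \<le> 2 / (pi\<^sup>2 * u\<^sup>2)"
  using cos_ge_minus_one[of "pi * u"]
  by (simp add: tri_hat_def power_mult_distrib divide_right_mono)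

lemma tri_hat_ge: "1/2 - pi\<^sup>2 * u\<^sup>2 / 24 \<le> tri_hat u"
proof (cases "u = 0")
  case False
  have "(1/2 - (pi * u)\<^sup>2 / 24) * (pi * u)\<^sup>2 \<le> 1 - cos (pi * u)"
    using cos_le_quartic[of "pi * u"] by (simp add: algebra_simps power2_eq_square power4_eq_xxxx)
  then show ?thesis
    using False by (simp add: tri_hat_def pos_le_divide_eq power_mult_distrib)
qed (simp add: tri_hat_def)

section \<open>Square integrals of the transform and of its first moment\<close>

lemma
  fixes g :: "'a::euclidean_space \<Rightarrow> real"
  assumes "g \<in> borel_measurable borel" and "\<And>x. 0 \<le> g x" and "(g has_integral I) UNIV"
  shows integrable_lborel_nonneg_has_integral: "integrable lborel g"
    and integral_lborel_nonneg_has_integral: "integral\<^sup>L lborel g = I"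
proof -
  have "g absolutely_integrable_on UNIV"
    using assms by (intro nonnegative_absolutely_integrable_1) (auto simp: integrable_on_def)
  then show integrable: "integrable lborel g"
    using integrable_completion[of g lborel] assms(1) by (simp add: set_integrable_def)
  show "integral\<^sup>L lborel g = I"
    using has_integral_integral_lborel[OF integrable] assms(3) by (rule has_integral_unique)
qed

lemma integrable_nonneg_le:
  fixes f g :: "'a \<Rightarrow> real"
  assumes "integrable M g" and "f \<in> borel_measurable M" and "\<And>x. 0 \<le> f x" and "\<And>x. f x \<le> g x"
  shows "integrable M f"
proof (rule Bochner_Integration.integrable_bound[OF assms(1,2)])
  show "AE x in M. norm (f x) \<le> norm (g x)"
    using assms(3,4) by (intro AE_I2) (metis abs_ge_self abs_of_nonneg order_trans real_norm_def)
qed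

definition inv_square_tail :: "real \<Rightarrow> real" where
  "inv_square_tail u = indicator {1..} \<bar>u\<bar> / u\<^sup>2"

lemma inv_square_tail_nonneg: "0 \<le> inv_square_tail u"
  by (simp add: inv_square_tail_def)

lemma
  shows integrable_inv_square_tail: "integrable lborel inv_square_tail"
    and integral_inv_square_tail: "integral\<^sup>L lborel inv_square_tail = 2"
proof -
  define r :: "real \<Rightarrow> real" where "r u = indicator {1..} u / u\<^sup>2" for u
  have inverse_square: "((\<lambda>u::real. 1 / u^2) has_integral 1) {1..}"
    using has_integral_inverse_power_to_inf[of 2 1] by simp
  have r_eq: "r = (\<lambda>u. if u \<in> {1..} then 1 / u^2 else 0)"
    by (auto simp: r_def fun_eq_iff)
  have "(r has_integral 1) UNIV"
    unfolding r_eq has_integral_restrict_UNIV by (rule inverse_square)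
  moreover have "r \<in> borel_measurable borel"
    unfolding r_def by measurable
  moreover have "0 \<le> r u" for u
    by (simp add: r_def)
  ultimately have r: "integrable lborel r" "integral\<^sup>L lborel r = 1"
    by (simp_all add: integrable_lborel_nonneg_has_integral integral_lborel_nonneg_has_integral)
  have r_reflect: "integrable lborel (\<lambda>u. r (0 + (-1) * u))" "integral\<^sup>L lborel (\<lambda>u. r (0 + (-1) * u)) = 1"
    using lborel_integrable_real_affine[OF r(1), of "-1" 0] lborel_integral_real_affine[of "-1" r 0] r(2)
    by simp_all
  have tail: "inv_square_tail = (\<lambda>u. r u + r (0 + (-1) * u))"
    by (auto simp: fun_eq_iff inv_square_tail_def r_def indicator_def)
  show "integrable lborel inv_square_tail"
    unfolding tail using r(1) r_reflect(1) by simp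
  show "integral\<^sup>L lborel inv_square_tail = 2"
    unfolding tail using r r_reflect by simp
qed

lemma integral_indicator_Icc_FTC:
  fixes f F :: "real \<Rightarrow> real"
  assumes "a \<le> b" and "\<And>x. (F has_real_derivative f x) (at x)" and "continuous_on {a..b} f"
  shows "integral\<^sup>L lborel (\<lambda>u. indicator {a..b} u * f u) = F b - F a"
  using integral_FTC_atLeastAtMost[of a b F f] assms
  by (simp add: has_real_derivative_iff_has_vector_derivative[symmetric] has_field_derivative_at_within)

lemma integrable_indicator_Icc:
  fixes f :: "real \<Rightarrow> real"
  assumes "continuous_on {a..b} f"
  shows "integrable lborel (\<lambda>u. indicator {a..b} u * f u)"
  using borel_integrable_atLeastAtMost'[OF assms] by (simp add: set_integrable_def)

lemma moment_tri_hat_sq_le_inverse_square: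
  assumes "1 \<le> \<bar>u\<bar>"
  shows "(u * tri_hat u)\<^sup>2 \<le> 4 / pi^4 * inv_square_tail u"
proof -
  have u: "u \<noteq> 0" "1 \<le> u\<^sup>2"
    using assms abs_square_less_1[of u] by auto
  have "(tri_hat u)\<^sup>2 \<le> (2 / (pi\<^sup>2 * u\<^sup>2))\<^sup>2"
    using tri_hat_le_inverse_square[OF u(1)] tri_hat_nonneg by (intro power_mono)
  then have "u\<^sup>2 * (tri_hat u)\<^sup>2 \<le> u\<^sup>2 * (2 / (pi\<^sup>2 * u\<^sup>2))\<^sup>2"
    by (intro mult_left_mono) auto
  also have "\<dots> = 4 / pi^4 * inv_square_tail u"
    using assms u by (simp add: inv_square_tail_def field_simps power2_eq_square power4_eq_xxxx)
  finally show ?thesis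
    by (simp add: power_mult_distrib)
qed

lemma tri_hat_sq_le_quarter: "(tri_hat u)\<^sup>2 \<le> 1/4"
proof -
  have "(tri_hat u)\<^sup>2 \<le> (1/2)\<^sup>2"
    using tri_hat_le_half tri_hat_nonneg by (intro power_mono)
  then show ?thesis
    by (simp add: power_divide)
qed

lemma tri_hat_sq_le:
  "(tri_hat u)\<^sup>2 \<le> indicator {-1..1} u * (1/4) + 4 / pi^4 * inv_square_tail u"
proof (cases "\<bar>u\<bar> \<le> 1")
  case True
  moreover have "0 \<le> 4 / pi^4 * inv_square_tail u"
    by (simp add: inv_square_tail_nonneg)
  ultimately show ?thesis
    using tri_hat_sq_le_quarter[of u] by (simp add: abs_le_iff)
next
  case False
  then have u: "1 \<le> \<bar>u\<bar>" "indicator {-1..1} u = (0::real)"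
    by (auto simp: abs_le_iff)
  then have "1 \<le> u\<^sup>2"
    using abs_le_square_iff[of 1 u] by simp
  then have "(tri_hat u)\<^sup>2 \<le> (u * tri_hat u)\<^sup>2"
    using mult_right_mono[of 1 "u\<^sup>2" "(tri_hat u)\<^sup>2"] by (simp add: power_mult_distrib)
  then show ?thesis
    using moment_tri_hat_sq_le_inverse_square[OF u(1)] u(2) by simp
qed

lemma moment_tri_hat_sq_le:
  "(u * tri_hat u)\<^sup>2 \<le> indicator {-1..1} u * (u\<^sup>2 / 4) + 4 / pi^4 * inv_square_tail u"
proof (cases "\<bar>u\<bar> \<le> 1")
  case True
  have "u\<^sup>2 * (tri_hat u)\<^sup>2 \<le> u\<^sup>2 * (1/4)"
    using tri_hat_sq_le_quarter by (intro mult_left_mono) auto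
  moreover have "0 \<le> 4 / pi^4 * inv_square_tail u"
    by (simp add: inv_square_tail_nonneg)
  ultimately show ?thesis
    using True by (simp add: power_mult_distrib abs_le_iff)
next
  case False
  then have u: "1 \<le> \<bar>u\<bar>" "indicator {-1..1} u = (0::real)"
    by (auto simp: abs_le_iff)
  then show ?thesis
    using moment_tri_hat_sq_le_inverse_square[OF u(1)] by simp
qed

lemma tri_hat_sq_ge: "indicator {-1..1} u * (1/2 - pi\<^sup>2 * u\<^sup>2 / 24)\<^sup>2 \<le> (tri_hat u)\<^sup>2"
proof (cases "\<bar>u\<bar> \<le> 1")
  case True
  then have "pi\<^sup>2 * u\<^sup>2 \<le> pi\<^sup>2"
    by (simp add: abs_square_le_1)
  also have "pi\<^sup>2 \<le> 3.2\<^sup>2"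
    using pi_approx by (intro power_mono) auto
  finally have "pi\<^sup>2 * u\<^sup>2 \<le> 3.2\<^sup>2" .
  moreover have "(3.2::real)\<^sup>2 < 12"
    by (simp add: power_divide)
  ultimately have "0 \<le> 1/2 - pi\<^sup>2 * u\<^sup>2 / 24"
    by linarith
  then have "(1/2 - pi\<^sup>2 * u\<^sup>2 / 24)\<^sup>2 \<le> (tri_hat u)\<^sup>2"
    using tri_hat_ge by (intro power_mono)
  then show ?thesis
    using True by (simp add: abs_le_iff)
qed (auto simp: abs_le_iff)

lemma tri_hat_measurable [measurable]: "tri_hat \<in> borel_measurable borel"
  unfolding tri_hat_def by measurable

lemma integrable_tri_hat_majorant:
  "integrable lborel (\<lambda>u. indicator {-1..1} u * (1/4) + 4 / pi^4 * inv_square_tail u)"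
  by (intro Bochner_Integration.integrable_add integrable_indicator_Icc continuous_intros
      integrable_mult_right integrable_inv_square_tail) simp

lemma integrable_moment_tri_hat_majorant:
  "integrable lborel (\<lambda>u. indicator {-1..1} u * (u\<^sup>2 / 4) + 4 / pi^4 * inv_square_tail u)"
  by (intro Bochner_Integration.integrable_add integrable_indicator_Icc continuous_intros
      integrable_mult_right integrable_inv_square_tail) simp

lemma integrable_tri_hat_sq: "integrable lborel (\<lambda>u. (tri_hat u)\<^sup>2)"
  by (rule integrable_nonneg_le[OF integrable_tri_hat_majorant _ _ tri_hat_sq_le]) simp_all

lemma integrable_moment_tri_hat_sq: "integrable lborel (\<lambda>u. (u * tri_hat u)\<^sup>2)"
  by (rule integrable_nonneg_le[OF integrable_moment_tri_hat_majorant _ _ moment_tri_hat_sq_le]) simp_all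

lemma integral_moment_tri_hat_majorant:
  "(\<integral>u. indicator {-1..1} u * (u\<^sup>2 / 4) + 4 / pi^4 * inv_square_tail u \<partial>lborel) = 1/6 + 8 / pi^4"
proof -
  have "(\<integral>u. indicator {-1..1} u * ((u::real)\<^sup>2 / 4) \<partial>lborel) = 1^3 / 12 - (-1)^3 / 12"
    by (rule integral_indicator_Icc_FTC)
      (auto intro!: derivative_eq_intros continuous_intros simp: power2_eq_square)
  then show ?thesis
    using integrable_indicator_Icc[of "-1" 1 "\<lambda>u. u\<^sup>2 / 4"]
    by (simp add: integrable_inv_square_tail integral_inv_square_tail continuous_intros)
qed

lemma integral_tri_hat_minorant:
  "(\<integral>u. indicator {-1..1} u * (1/2 - pi\<^sup>2 * u\<^sup>2 / 24)\<^sup>2 \<partial>lborel) = 1/2 - pi\<^sup>2 / 36 + pi^4 / 1440"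
proof -
  define F where "F u = u / 4 - pi\<^sup>2 * u^3 / 72 + pi^4 * u^5 / 2880" for u :: real
  have "(F has_real_derivative (1/2 - pi\<^sup>2 * u\<^sup>2 / 24)\<^sup>2) (at u)" for u
    unfolding F_def
    by (auto intro!: derivative_eq_intros simp: field_simps power2_eq_square power4_eq_xxxx)
  then have "(\<integral>u. indicator {-1..1} u * (1/2 - pi\<^sup>2 * u\<^sup>2 / 24)\<^sup>2 \<partial>lborel) = F 1 - F (-1)"
    by (intro integral_indicator_Icc_FTC continuous_intros) auto
  then show ?thesis
    by (simp add: F_def)
qed

lemma pi_moment_estimate: "1/6 + 8 / pi^4 < 1/2 - pi\<^sup>2 / 36 + pi^4 / 1440"
proof -
  have pi4: "3^4 \<le> pi^4" and pi2: "pi\<^sup>2 \<le> 3.15\<^sup>2"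
    using pi_gt3 pi_approx by (intro power_mono; simp)+
  have "8 / pi^4 \<le> 8 / 3^4"
    using pi4 by (intro divide_left_mono) auto
  moreover have "3^4 / 1440 \<le> pi^4 / 1440"
    using pi4 by (rule divide_right_mono) simp
  moreover have "pi\<^sup>2 / 36 \<le> 3.15\<^sup>2 / 36"
    using pi2 by (rule divide_right_mono) simp
  ultimately show ?thesis
    by (simp add: power_divide)
qed

lemma integral_moment_tri_hat_sq_less:
  "(\<integral>u. (u * tri_hat u)\<^sup>2 \<partial>lborel) < (\<integral>u. (tri_hat u)\<^sup>2 \<partial>lborel)"
proof -
  have "(\<integral>u. (u * tri_hat u)\<^sup>2 \<partial>lborel)
      \<le> (\<integral>u. indicator {-1..1} u * (u\<^sup>2 / 4) + 4 / pi^4 * inv_square_tail u \<partial>lborel)"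
    by (rule integral_mono[OF integrable_moment_tri_hat_sq integrable_moment_tri_hat_majorant
          moment_tri_hat_sq_le])
  also have "\<dots> < 1/2 - pi\<^sup>2 / 36 + pi^4 / 1440"
    unfolding integral_moment_tri_hat_majorant by (rule pi_moment_estimate)
  also have "\<dots> = (\<integral>u. indicator {-1..1} u * (1/2 - pi\<^sup>2 * u\<^sup>2 / 24)\<^sup>2 \<partial>lborel)"
    by (rule integral_tri_hat_minorant[symmetric])
  also have "\<dots> \<le> (\<integral>u. (tri_hat u)\<^sup>2 \<partial>lborel)"
    by (rule integral_mono[OF _ integrable_tri_hat_sq tri_hat_sq_ge])
      (intro integrable_indicator_Icc continuous_intros; simp)
  finally show ?thesis .
qed

lemma integral_tri_hat_sq_pos: "0 < (\<integral>u. (tri_hat u)\<^sup>2 \<partial>lborel)"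
proof -
  have "0 \<le> (\<integral>u. (u * tri_hat u)\<^sup>2 \<partial>lborel)"
    by simp
  then show ?thesis
    using integral_moment_tri_hat_sq_less by linarith
qed

lemma measurable_cis [measurable]: "f \<in> borel_measurable M \<Longrightarrow> (\<lambda>x. cis (f x)) \<in> borel_measurable M"
  unfolding cis_conv_exp by measurable

lemma
  fixes f :: "real \<Rightarrow> complex"
  assumes "f \<in> borel_measurable borel" and "\<And>v. v \<in> {a..b} \<Longrightarrow> norm (f v) \<le> C"
    and "(f has_integral I) {a..b}"
  shows set_integrable_bounded_Icc: "set_integrable lborel {a..b} f"
    and set_lebesgue_integral_has_integral_Icc: "(LINT v:{a..b}|lborel. f v) = I"
proof -
  show integrable: "set_integrable lborel {a..b} f"
    unfolding set_integrable_def
    using assms(1,2)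
    by (intro integrableI_bounded_set_indicator[where B = C]) (auto simp: emeasure_lborel_Icc_eq)
  show "(LINT v:{a..b}|lborel. f v) = I"
    using set_borel_integral_eq_integral(2)[OF integrable] assms(3) by (simp add: integral_unique)
qed

lemma
  fixes \<phi> :: "'n::finite \<Rightarrow> real \<Rightarrow> real" and c :: "real^'n"
  assumes "\<And>i. integrable lborel (\<lambda>u. (\<phi> i u)\<^sup>2)"
  shows integrable_separable_sq:
      "integrable lborel (\<lambda>y. (cmod (of_real (\<Prod>i\<in>UNIV. \<phi> i (y$i - c$i)) :: complex))\<^sup>2)"
    and L2_norm_sq_separable:
      "L2_norm_sq (\<lambda>y. of_real (\<Prod>i\<in>UNIV. \<phi> i (y$i - c$i))) = (\<Prod>i\<in>UNIV. \<integral>u. (\<phi> i u)\<^sup>2 \<partial>lborel)"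
proof -
  have sq: "(cmod (of_real (\<Prod>i\<in>UNIV. \<phi> i (y$i - c$i)) :: complex))\<^sup>2 = (\<Prod>i\<in>UNIV. (\<phi> i (y$i - c$i))\<^sup>2)"
    for y :: "real^'n"
    by (simp add: prod_norm[symmetric] prod_power_distrib)
  have shifted: "integrable lborel (\<lambda>v. (\<phi> i (v - c$i))\<^sup>2)"
    and shifted_integral: "(\<integral>v. (\<phi> i (v - c$i))\<^sup>2 \<partial>lborel) = (\<integral>u. (\<phi> i u)\<^sup>2 \<partial>lborel)" for i
    using lborel_integrable_real_affine[OF assms[of i], of 1 "- c$i"]
      lborel_integral_real_affine[of 1 "\<lambda>u. (\<phi> i u)\<^sup>2" "- c$i"] by simp_all
  show "integrable lborel (\<lambda>y. (cmod (of_real (\<Prod>i\<in>UNIV. \<phi> i (y$i - c$i)) :: complex))\<^sup>2)"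
    unfolding sq by (rule integrable_lborel_prod_vec[OF shifted])
  show "L2_norm_sq (\<lambda>y. of_real (\<Prod>i\<in>UNIV. \<phi> i (y$i - c$i))) = (\<Prod>i\<in>UNIV. \<integral>u. (\<phi> i u)\<^sup>2 \<partial>lborel)"
    unfolding L2_norm_sq_def sq integral_lborel_prod_vec[OF shifted] shifted_integral ..
qed

lemma separable_fourier_representation:
  fixes K :: "'n::finite \<Rightarrow> real \<Rightarrow> complex" and \<phi> :: "'n \<Rightarrow> real \<Rightarrow> real" and c y :: "real^'n"
  assumes K_measurable [measurable]: "\<And>i. K i \<in> borel_measurable borel"
    and K_bounded: "\<And>i v. v \<in> {-1/2..1/2} \<Longrightarrow> norm (K i v) \<le> 1"
    and K_transform: "\<And>i u. ((\<lambda>v. K i v * cis (2 * pi * u * v)) has_integral of_real (\<phi> i u)) {-1/2..1/2}"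
  shows "(LINT w:unit_cube|lborel. (\<Prod>i\<in>UNIV. K i (w$i) * cis (- (2 * pi * w$i * c$i))) * cis (2 * pi * (w \<bullet> y)))
    = of_real (\<Prod>i\<in>UNIV. \<phi> i (y$i - c$i))"
proof -
  define h where "h i v = K i v * cis (2 * pi * (y$i - c$i) * v)" for i v
  have h_measurable: "h i \<in> borel_measurable borel" for i
    unfolding h_def by measurable
  have h_bounded: "norm (h i v) \<le> 1" if "v \<in> {-1/2..1/2}" for i v
    using K_bounded[OF that] by (simp add: h_def norm_mult)
  have h_transform: "(h i has_integral of_real (\<phi> i (y$i - c$i))) {-1/2..1/2}" for i
    unfolding h_def by (rule K_transform)
  have "(\<Prod>i\<in>UNIV. K i (w$i) * cis (- (2 * pi * w$i * c$i))) * cis (2 * pi * (w \<bullet> y))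
      = (\<Prod>i\<in>UNIV. h i (w$i))" for w :: "real^'n"
    by (simp add: h_def inner_vec_def sum_distrib_left cis_conv_exp exp_sum
        prod.distrib[symmetric] exp_add[symmetric] algebra_simps)
  then have "(LINT w:unit_cube|lborel. (\<Prod>i\<in>UNIV. K i (w$i) * cis (- (2 * pi * w$i * c$i))) * cis (2 * pi * (w \<bullet> y)))
      = (LINT w:unit_cube|lborel. \<Prod>i\<in>UNIV. h i (w$i))"
    by simp
  also have "\<dots> = (\<Prod>i\<in>UNIV. LINT v:{-1/2..1/2}|lborel. h i v)"
    by (rule set_lebesgue_integral_unit_cube_prod[OF set_integrable_bounded_Icc[OF h_measurable h_bounded h_transform]])
  also have "\<dots> = (\<Prod>i\<in>UNIV. of_real (\<phi> i (y$i - c$i)))"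
    using set_lebesgue_integral_has_integral_Icc[OF h_measurable h_bounded h_transform] by simp
  finally show ?thesis
    by simp
qed

lemma separable_in_PW_unit_cube:
  fixes K :: "'n::finite \<Rightarrow> real \<Rightarrow> complex" and \<phi> :: "'n \<Rightarrow> real \<Rightarrow> real" and c :: "real^'n"
  assumes K_measurable [measurable]: "\<And>i. K i \<in> borel_measurable borel"
    and K_bounded: "\<And>i v. v \<in> {-1/2..1/2} \<Longrightarrow> norm (K i v) \<le> 1"
    and K_transform: "\<And>i u. ((\<lambda>v. K i v * cis (2 * pi * u * v)) has_integral of_real (\<phi> i u)) {-1/2..1/2}"
    and \<phi>_measurable [measurable]: "\<And>i. \<phi> i \<in> borel_measurable borel"
    and \<phi>_square_integrable: "\<And>i. integrable lborel (\<lambda>u. (\<phi> i u)\<^sup>2)"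
  shows "(\<lambda>y. of_real (\<Prod>i\<in>UNIV. \<phi> i (y$i - c$i))) \<in> PW unit_cube"
proof -
  define g where "g w = (\<Prod>i\<in>UNIV. K i (w$i) * cis (- (2 * pi * w$i * c$i)))" for w :: "real^'n"
  have g_measurable [measurable]: "g \<in> borel_measurable borel"
    unfolding g_def by measurable
  have "norm (g w) \<le> 1" if "w \<in> unit_cube" for w
  proof -
    have "norm (g w) = (\<Prod>i\<in>UNIV. norm (K i (w$i)))"
      by (simp add: g_def prod_norm[symmetric] norm_mult)
    also have "\<dots> \<le> (\<Prod>i\<in>(UNIV::'n set). 1)"
      using that K_bounded by (intro prod_mono) (auto simp: mem_unit_cube)
    finally show ?thesis
      by simp
  qed
  then have "set_integrable lborel unit_cube (\<lambda>w. (cmod (g w))\<^sup>2)"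
    unfolding set_integrable_def
    by (intro integrableI_bounded_set_indicator[where B = 1])
      (auto simp: unit_cube_cbox emeasure_lborel_cbox_eq power_le_one)
  moreover have "(LINT w:unit_cube|lborel. g w * cis (2 * pi * (w \<bullet> y))) = of_real (\<Prod>i\<in>UNIV. \<phi> i (y$i - c$i))"
    for y :: "real^'n"
    unfolding g_def by (rule separable_fourier_representation[OF K_measurable K_bounded K_transform])
  moreover have "(\<lambda>y. of_real (\<Prod>i\<in>UNIV. \<phi> i (y$i - c$i)) :: complex) \<in> borel_measurable lborel"
    by measurable
  moreover have "g \<in> borel_measurable lborel"
    by simp
  moreover have "integrable lborel (\<lambda>y. (cmod (of_real (\<Prod>i\<in>UNIV. \<phi> i (y$i - c$i)) :: complex))\<^sup>2)"
    by (rule integrable_separable_sq) (rule \<phi>_square_integrable)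
  ultimately show ?thesis
    unfolding PW_def by (intro CollectI conjI exI[of _ g] allI) simp_all
qed

section \<open>The test functions\<close>

definition tri_bump :: "real^'n \<Rightarrow> real^'n \<Rightarrow> complex" where
  "tri_bump c y = of_real (\<Prod>i\<in>UNIV. tri_hat (y$i - c$i))"

lemma norm_tri_le: "v \<in> {-1/2..1/2} \<Longrightarrow> norm (tri v) \<le> 1"
  unfolding tri_def norm_of_real by auto

lemma norm_tri_slope_le: "norm (tri_slope v) \<le> 1"
  using pi_gt3 by (simp add: tri_slope_def norm_divide)

lemma tri_kernels_measurable [measurable]: "tri \<in> borel_measurable borel" "tri_slope \<in> borel_measurable borel"
  unfolding tri_def tri_slope_def by measurable

lemma tri_bump_in_PW: "tri_bump c \<in> PW unit_cube"
  unfolding tri_bump_def[abs_def]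
  by (rule separable_in_PW_unit_cube[where K = "\<lambda>_. tri", OF tri_kernels_measurable(1) norm_tri_le
        has_integral_tri_cis tri_hat_measurable integrable_tri_hat_sq])

lemma L2_norm_sq_tri_bump:
  "L2_norm_sq (tri_bump (c :: real^'n)) = (\<integral>u. (tri_hat u)\<^sup>2 \<partial>lborel) ^ CARD('n)"
  unfolding tri_bump_def[abs_def] L2_norm_sq_separable[OF integrable_tri_hat_sq] by simp

lemma moment_tri_bump_eq:
  fixes c :: "real^'n"
  shows "(\<lambda>y. of_real (y$j - c$j) * tri_bump c y)
    = (\<lambda>y. of_real (\<Prod>i\<in>UNIV. (if i = j then (\<lambda>u. u * tri_hat u) else tri_hat) (y$i - c$i)))"
proof -
  have "(\<Prod>i\<in>UNIV. (if i = j then (\<lambda>u. u * tri_hat u) else tri_hat) (y$i - c$i))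
      = (\<Prod>i\<in>UNIV. (if i = j then y$j - c$j else 1) * tri_hat (y$i - c$i))" for y :: "real^'n"
    by (intro prod.cong) auto
  then show ?thesis
    by (simp add: fun_eq_iff tri_bump_def prod.distrib)
qed

lemma moment_tri_bump_in_PW:
  fixes c :: "real^'n"
  shows "(\<lambda>y. of_real (y$j - c$j) * tri_bump c y) \<in> PW unit_cube"
proof -
  have "((\<lambda>v. (if i = j then tri_slope else tri) v * cis (2 * pi * u * v)) has_integral
      of_real ((if i = j then (\<lambda>u. u * tri_hat u) else tri_hat) u)) {-1/2..1/2}" for i u
    using has_integral_tri_cis[of u] has_integral_tri_slope_cis[of u] by simp
  moreover have "norm ((if i = j then tri_slope else tri) v) \<le> 1" if "v \<in> {-1/2..1/2}" for i v
    using norm_tri_le[OF that] norm_tri_slope_le[of v] by simp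
  moreover have "integrable lborel (\<lambda>u. ((if i = j then (\<lambda>u. u * tri_hat u) else tri_hat) u)\<^sup>2)" for i
    using integrable_tri_hat_sq integrable_moment_tri_hat_sq by simp
  moreover have "(if i = j then tri_slope else tri) \<in> borel_measurable borel" for i
    by simp
  moreover have "(if i = j then (\<lambda>u. u * tri_hat u) else tri_hat) \<in> borel_measurable borel" for i
    by simp
  ultimately show ?thesis
    unfolding moment_tri_bump_eq
    by (intro separable_in_PW_unit_cube[where K = "\<lambda>i. if i = j then tri_slope else tri"])
qed

lemma L2_norm_sq_moment_tri_bump:
  fixes c :: "real^'n"
  shows "L2_norm_sq (\<lambda>y. of_real (y$j - c$j) * tri_bump c y)
    = (\<integral>u. (u * tri_hat u)\<^sup>2 \<partial>lborel) * (\<integral>u. (tri_hat u)\<^sup>2 \<partial>lborel) ^ (CARD('n) - 1)"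
proof -
  have "integrable lborel (\<lambda>u. ((if i = j then (\<lambda>u. u * tri_hat u) else tri_hat) u)\<^sup>2)" for i
    using integrable_tri_hat_sq integrable_moment_tri_hat_sq by simp
  then have "L2_norm_sq (\<lambda>y. of_real (y$j - c$j) * tri_bump c y)
      = (\<Prod>i\<in>UNIV. \<integral>u. ((if i = j then (\<lambda>u. u * tri_hat u) else tri_hat) u)\<^sup>2 \<partial>lborel)"
    unfolding moment_tri_bump_eq by (rule L2_norm_sq_separable)
  also have "\<dots> = (\<Prod>i\<in>UNIV. if i = j then \<integral>u. (u * tri_hat u)\<^sup>2 \<partial>lborel else \<integral>u. (tri_hat u)\<^sup>2 \<partial>lborel)"
    by (intro prod.cong) auto
  also have "\<dots> = (\<integral>u. (u * tri_hat u)\<^sup>2 \<partial>lborel) * (\<integral>u. (tri_hat u)\<^sup>2 \<partial>lborel) ^ (CARD('n) - 1)"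
    using card_Diff_singleton[of j UNIV] by (simp add: prod.If_cases Int_absorb1 Compl_eq_Diff_UNIV)
  finally show ?thesis .
qed

lemma has_sum_finite_sum:
  fixes f :: "'i \<Rightarrow> 'a \<Rightarrow> 'b::topological_comm_monoid_add"
  assumes "finite I" and "\<And>j. j \<in> I \<Longrightarrow> (f j has_sum s j) A"
  shows "((\<lambda>x. \<Sum>j\<in>I. f j x) has_sum (\<Sum>j\<in>I. s j)) A"
  using assms by (induction I rule: finite_induct) (auto intro: has_sum_add)

lemma stable_sampling_coordinate_moments:
  fixes \<Lambda> \<Omega> :: "(real^'n) set" and F :: "real^'n \<Rightarrow> complex" and H :: "'n \<Rightarrow> real^'n \<Rightarrow> complex"
  assumes sampling: "stable_sampling \<Lambda> \<Omega> A B"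
    and PW: "F \<in> PW \<Omega>" "\<And>j. H j \<in> PW \<Omega>"
    and moment: "\<And>j y. cmod (H j y) = \<bar>y$j - c$j\<bar> * cmod (F y)"
    and avoids: "\<Lambda> \<inter> {y. \<forall>i. \<bar>y$i - c$i\<bar> \<le> R} = {}" and "0 \<le> R"
  shows "R\<^sup>2 * (A * L2_norm_sq F) \<le> B * (\<Sum>j\<in>UNIV. L2_norm_sq (H j))"
proof -
  have F_sum: "(\<lambda>l. (cmod (F l))\<^sup>2) summable_on \<Lambda>" "A * L2_norm_sq F \<le> (\<Sum>\<^sub>\<infinity>l\<in>\<Lambda>. (cmod (F l))\<^sup>2)"
    and H_sum: "\<And>j. (\<lambda>l. (cmod (H j l))\<^sup>2) summable_on \<Lambda>"
      "\<And>j. (\<Sum>\<^sub>\<infinity>l\<in>\<Lambda>. (cmod (H j l))\<^sup>2) \<le> B * L2_norm_sq (H j)"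
    using sampling PW by (auto simp: stable_sampling_def)
  have pointwise: "R\<^sup>2 * (cmod (F l))\<^sup>2 \<le> (\<Sum>j\<in>UNIV. (cmod (H j l))\<^sup>2)" if "l \<in> \<Lambda>" for l
  proof -
    have "l \<notin> {y. \<forall>i. \<bar>y$i - c$i\<bar> \<le> R}"
      using that avoids by blast
    then obtain j where "R < \<bar>l$j - c$j\<bar>"
      by (auto simp: not_le)
    then have "R\<^sup>2 \<le> (l$j - c$j)\<^sup>2"
      using \<open>0 \<le> R\<close> by (metis abs_le_square_iff abs_of_nonneg less_imp_le)
    then have "R\<^sup>2 * (cmod (F l))\<^sup>2 \<le> (cmod (H j l))\<^sup>2"
      by (simp add: moment power_mult_distrib mult_right_mono)
    also have "\<dots> \<le> (\<Sum>j\<in>UNIV. (cmod (H j l))\<^sup>2)"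
      by (rule member_le_sum) auto
    finally show ?thesis .
  qed
  have H_total: "((\<lambda>l. \<Sum>j\<in>UNIV. (cmod (H j l))\<^sup>2) has_sum (\<Sum>j\<in>UNIV. \<Sum>\<^sub>\<infinity>l\<in>\<Lambda>. (cmod (H j l))\<^sup>2)) \<Lambda>"
    using H_sum(1) by (intro has_sum_finite_sum) auto
  have "R\<^sup>2 * (A * L2_norm_sq F) \<le> R\<^sup>2 * (\<Sum>\<^sub>\<infinity>l\<in>\<Lambda>. (cmod (F l))\<^sup>2)"
    using F_sum(2) by (rule mult_left_mono) simp
  also have "\<dots> = (\<Sum>\<^sub>\<infinity>l\<in>\<Lambda>. R\<^sup>2 * (cmod (F l))\<^sup>2)"
    by (rule infsum_cmult_right[symmetric]) (use F_sum(1) in simp)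
  also have "\<dots> \<le> (\<Sum>j\<in>UNIV. \<Sum>\<^sub>\<infinity>l\<in>\<Lambda>. (cmod (H j l))\<^sup>2)"
    using infsum_mono[OF summable_on_cmult_right[OF F_sum(1)] has_sum_imp_summable[OF H_total] pointwise]
      H_total by (simp add: infsumI)
  also have "\<dots> \<le> (\<Sum>j\<in>UNIV. B * L2_norm_sq (H j))"
    by (rule sum_mono) (rule H_sum(2))
  finally show ?thesis
    by (simp add: sum_distrib_left)
qed

lemma sampling_radius_sq_ge:
  fixes d :: nat and t :: real
  assumes "1 \<le> d" and "1 \<le> t"
  shows "real d * t \<le> (1/2 + real d * pi ^ (2 * d - 2) / 2 ^ (2 * d - 1) * t)\<^sup>2"
proof -
  define e where "e = 2 * d - 2"
  define K where "K = real d * pi ^ e / 2 ^ Suc e"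
  have "2 * d - 1 = Suc e"
    using assms(1) by (simp add: e_def)
  then have K_eq: "real d * pi ^ (2 * d - 2) / 2 ^ (2 * d - 1) = K"
    by (simp add: K_def e_def)
  have "(2::real) ^ e \<le> pi ^ e"
    using pi_ge_two by (rule power_mono) simp
  then have "real d / 2 \<le> K"
    unfolding K_def by (simp add: field_simps mult_left_mono)
  then have "real d / 2 * t \<le> K * t"
    using assms(2) by (intro mult_right_mono) auto
  then have "real d * t \<le> 2 * (K * t)"
    by simp
  also have "\<dots> \<le> (1/2 + K * t)\<^sup>2"
    using zero_le_power2[of "1/2 - K * t"] by (simp add: power2_eq_square algebra_simps)
  finally show ?thesis
    unfolding K_eq .
qed

lemma stable_sampling_avoiding_cube:
  fixes \<Lambda> :: "(real^'n) set"
  assumes "stable_sampling \<Lambda> unit_cube A B"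
    and avoids: "\<Lambda> \<inter> {y. \<forall>i. \<bar>y$i - c$i\<bar> \<le> R} = {}" and "0 \<le> R"
  shows "R\<^sup>2 * A * (\<integral>u. (tri_hat u)\<^sup>2 \<partial>lborel) \<le> real CARD('n) * B * (\<integral>u. (u * tri_hat u)\<^sup>2 \<partial>lborel)"
proof -
  define P Q where "P = (\<integral>u. (tri_hat u)\<^sup>2 \<partial>lborel)" and "Q = (\<integral>u. (u * tri_hat u)\<^sup>2 \<partial>lborel)"
  have "R\<^sup>2 * (A * L2_norm_sq (tri_bump c))
      \<le> B * (\<Sum>j\<in>UNIV. L2_norm_sq (\<lambda>y. of_real (y$j - c$j) * tri_bump c y))"
    by (rule stable_sampling_coordinate_moments[OF assms(1) tri_bump_in_PW moment_tri_bump_in_PW _ avoids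
          \<open>0 \<le> R\<close>]) (simp only: norm_mult norm_of_real)
  then have "R\<^sup>2 * (A * P ^ CARD('n)) \<le> B * (real CARD('n) * (Q * P ^ (CARD('n) - 1)))"
    unfolding L2_norm_sq_tri_bump L2_norm_sq_moment_tri_bump by (simp add: P_def Q_def)
  moreover have "P ^ CARD('n) = P * P ^ (CARD('n) - 1)"
    by (simp add: power_eq_if)
  ultimately have "(R\<^sup>2 * A * P) * P ^ (CARD('n) - 1) \<le> (real CARD('n) * B * Q) * P ^ (CARD('n) - 1)"
    by (simp add: mult_ac)
  then show ?thesis
    using integral_tri_hat_sq_pos by (simp add: P_def Q_def)
qed

theorem proposition4p4:
  fixes \<Lambda> :: "(real ^ 'n) set" and A B :: real
  assumes "stable_sampling \<Lambda> unit_cube A B"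
  defines "R \<equiv> 1/2 + real CARD('n) * pi ^ (2 * CARD('n) - 2) / 2 ^ (2 * CARD('n) - 1) * (B / A)"
  shows "\<forall>x :: real ^ 'n. \<Lambda> \<inter> {y. \<forall>i. \<bar>y $ i - x $ i\<bar> \<le> R} \<noteq> {}"
proof (intro allI notI)
  fix x :: "real^'n"
  assume avoids: "\<Lambda> \<inter> {y. \<forall>i. \<bar>y $ i - x $ i\<bar> \<le> R} = {}"
  define d P Q where "d = CARD('n)" and "P = (\<integral>u. (tri_hat u)\<^sup>2 \<partial>lborel)"
    and "Q = (\<integral>u. (u * tri_hat u)\<^sup>2 \<partial>lborel)"
  have AB: "0 < A" "A \<le> B" and d: "1 \<le> d"
    using assms(1) by (simp_all add: stable_sampling_def d_def Suc_le_eq)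
  then have "0 \<le> R"
    by (simp add: R_def)
  then have "R\<^sup>2 * A * P \<le> real d * B * Q"
    using stable_sampling_avoiding_cube[OF assms(1) avoids] by (simp add: P_def Q_def d_def)
  also have "\<dots> < real d * B * P"
    using integral_moment_tri_hat_sq_less AB d by (simp add: P_def Q_def)
  finally have "R\<^sup>2 < real d * (B / A)"
    using integral_tri_hat_sq_pos AB by (simp add: P_def field_simps)
  moreover have "real d * (B / A) \<le> R\<^sup>2"
    unfolding R_def d_def using AB d by (intro sampling_radius_sq_ge) (simp_all add: d_def)
  ultimately show False
    by simp
qed

end
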